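(* If $X$ is a crowded submaximal space, then $X$ has no weakly converging sequences.
   Context: A space is crowded if it is non-empty and has no isolated points. A space is submaximal if every dense subset of it is open. A weakly converging sequence in $X$ is a countably infinite family $\mathcal S=\{S_n:n\in\omega\}$ of pairwise disjoint non-empty finite subsets of $X$ for which there is a point $x\in X$ such that for every neighborhood $W$ of $x$ there is a finite set $F\subseteq\omega$ with $S_n\cap W\neq\emptyset$ for all $n\in\omega\setminus F$. *)

theory Defs
  imports "HOL-Analysis.Analysis"
begin

definition isolated_point :: "'a topology \<Rightarrow> 'a \<Rightarrow> bool" where
  "isolated_point X x \<longleftrightarrow> x \<in> topspace X \<and> openin X {x}"

definition crowded :: "'a topology \<Rightarrow> bool" where
  "crowded X \<longleftrightarrow> topspace X \<noteq> {} \<and> (\<forall>x. \<not> isolated_point X x)"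

definition dense_in :: "'a topology \<Rightarrow> 'a set \<Rightarrow> bool" where
  "dense_in X D \<longleftrightarrow> D \<subseteq> topspace X \<and> X closure_of D = topspace X"

definition submaximal :: "'a topology \<Rightarrow> bool" where
  "submaximal X \<longleftrightarrow> (\<forall>D. dense_in X D \<longrightarrow> openin X D)"

definition neighbourhood :: "'a topology \<Rightarrow> 'a \<Rightarrow> 'a set \<Rightarrow> bool" where
  "neighbourhood X x W \<longleftrightarrow> (\<exists>U. openin X U \<and> x \<in> U \<and> U \<subseteq> W)"

definition weakly_converging_sequence :: "'a topology \<Rightarrow> (nat \<Rightarrow> 'a set) \<Rightarrow> bool" where
  "weakly_converging_sequence X S \<longleftrightarrow>
     (\<forall>n. S n \<subseteq> topspace X \<and> S n \<noteq> {} \<and> finite (S n)) \<and>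
     (\<forall>m n. m \<noteq> n \<longrightarrow> S m \<inter> S n = {}) \<and>
     (\<exists>x\<in>topspace X. \<forall>W. neighbourhood X x W \<longrightarrow>
        (\<exists>F. finite F \<and> (\<forall>n. n \<notin> F \<longrightarrow> S n \<inter> W \<noteq> {})))"

end

theory Submission
  imports Defs
begin

text \<open>
  In a crowded submaximal space every set with empty interior is closed, points are closed, and
  finite sets have empty interior. Given a weakly converging sequence \<open>S\<close> with limit \<open>x\<close>, attach
  to every branch of the binary tree the union of the \<open>S n\<close> along it; these continuum many sets
  pairwise meet in finite sets, so their interiors are pairwise disjoint subsets of the countable
  set \<open>\<Union>n. S n\<close>, and one of them must have empty interior. That union, with \<open>x\<close> removed, is a
  closed set missing \<open>x\<close> that contains infinitely many \<open>S n\<close>, contradicting weak convergence.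
\<close>

lemma uncountable_UNIV_nat_set: "uncountable (UNIV :: nat set set)"
  using Cantors_theorem[of UNIV] by (auto simp: uncountable_def)

lemma almost_disjoint_family_nat:
  obtains N :: "nat set \<Rightarrow> nat set"
  where "\<And>A. infinite (N A)" and "\<And>A B. A \<noteq> B \<Longrightarrow> finite (N A \<inter> N B)"
proof
  \<comment> \<open>the nodes of the binary tree lying on the branch \<open>A\<close>, coded as natural numbers\<close>
  define code where "code A k = to_nat (map (\<lambda>i. i \<in> A) [0..<k])" for A :: "nat set" and k
  have code_eq: "k = l \<and> (\<forall>i<k. i \<in> A \<longleftrightarrow> i \<in> B)" if "code A k = code B l" for A B k l
  proof -
    have eq: "map (\<lambda>i. i \<in> A) [0..<k] = map (\<lambda>i. i \<in> B) [0..<l]"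
      using that unfolding code_def by (rule injD[OF inj_to_nat])
    then have "k = l" by (metis length_map length_upt diff_zero)
    with eq show ?thesis by (auto dest: map_eq_conv[THEN iffD1] simp: list_eq_iff_nth_eq)
  qed
  show "infinite (range (code A))" for A
    using code_eq by (auto simp: finite_image_iff inj_def)
  show "finite (range (code A) \<inter> range (code B))" if "A \<noteq> B" for A B
  proof -
    obtain i where i: "i \<in> A \<longleftrightarrow> i \<notin> B" using \<open>A \<noteq> B\<close> by blast
    have "range (code A) \<inter> range (code B) \<subseteq> code A ` {..i}"
    proof
      fix m assume "m \<in> range (code A) \<inter> range (code B)"
      then obtain k l where m: "m = code A k" "code A k = code B l" by auto
      with code_eq i have "k \<le> i" by (meson not_le)
      with m(1) show "m \<in> code A ` {..i}" by simp
    qed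
    then show ?thesis by (rule finite_subset) simp
  qed
qed

lemma submaximal_closedin_of_interior_empty:
  assumes "submaximal X" "C \<subseteq> topspace X" "X interior_of C = {}"
  shows "closedin X C"
proof -
  have "dense_in X (topspace X - C)"
    using assms(3) by (simp add: dense_in_def closure_of_complement)
  then have "openin X (topspace X - C)" using assms(1) by (simp add: submaximal_def)
  then show ?thesis using assms(2) by (simp add: closedin_def)
qed

lemma crowded_not_openin_singleton: "crowded X \<Longrightarrow> \<not> openin X {x}"
  by (auto simp: crowded_def isolated_point_def dest: openin_subset)

lemma crowded_submaximal_imp_t1_space:
  assumes "crowded X" "submaximal X"
  shows "t1_space X"
  unfolding t1_space_closedin_singleton
proof
  fix x assume "x \<in> topspace X"
  have "X interior_of {x} = {}"
    using assms(1) by (auto simp: interior_of_eq_empty crowded_not_openin_singleton subset_singleton_iff)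
  with assms(2) \<open>x \<in> topspace X\<close> show "closedin X {x}"
    by (intro submaximal_closedin_of_interior_empty) auto
qed

lemma crowded_t1_space_interior_of_finite:
  assumes "crowded X" "t1_space X" "finite F"
  shows "X interior_of F = {}"
proof (rule ccontr)
  let ?G = "X interior_of F"
  assume "?G \<noteq> {}"
  then obtain y where y: "y \<in> ?G" by blast
  have "closedin X (?G - {y})"
    using assms(2,3) interior_of_subset[of X F] interior_of_subset_topspace[of X F]
    by (intro t1_space_closedin_finite[THEN iffD1, rule_format]) (auto intro: finite_subset)
  then have "openin X (?G - (?G - {y}))" by (intro openin_diff) auto
  moreover have "?G - (?G - {y}) = {y}" using y by blast
  ultimately show False using assms(1) by (simp add: crowded_not_openin_singleton)
qed

lemma crowded_submaximal_union_interior_empty: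
  fixes S :: "nat \<Rightarrow> 'a set"
  assumes "crowded X" "submaximal X"
    and fin: "\<And>n. finite (S n)" and disj: "\<And>m n. m \<noteq> n \<Longrightarrow> S m \<inter> S n = {}"
  obtains N where "infinite N" "X interior_of (\<Union>n\<in>N. S n) = {}"
proof -
  obtain N :: "nat set \<Rightarrow> nat set" where N_inf: "\<And>A. infinite (N A)"
    and N_ad: "\<And>A B. A \<noteq> B \<Longrightarrow> finite (N A \<inter> N B)"
    using almost_disjoint_family_nat by blast
  have t1: "t1_space X" using assms(1,2) by (rule crowded_submaximal_imp_t1_space)
  define U where "U A = (\<Union>n\<in>N A. S n)" for A
  have "\<exists>A. X interior_of U A = {}"
  proof (rule ccontr)
    assume "\<nexists>A. X interior_of U A = {}"
    then have "\<forall>A. \<exists>y. y \<in> X interior_of U A" by blast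
    then obtain p where p: "\<And>A. p A \<in> X interior_of U A" by metis
    have "inj p"
    proof (rule injI, rule ccontr)
      fix A B assume "p A = p B" "A \<noteq> B"
      have "U A \<inter> U B \<subseteq> (\<Union>n\<in>N A \<inter> N B. S n)"
      proof
        fix z assume "z \<in> U A \<inter> U B"
        then obtain m n where "m \<in> N A" "n \<in> N B" "z \<in> S m" "z \<in> S n"
          by (auto simp: U_def)
        with disj[of m n] show "z \<in> (\<Union>n\<in>N A \<inter> N B. S n)" by (cases "m = n") auto
      qed
      then have "X interior_of (U A \<inter> U B) \<subseteq> X interior_of (\<Union>n\<in>N A \<inter> N B. S n)"
        by (rule interior_of_mono)
      also have "\<dots> = {}"
        using N_ad[OF \<open>A \<noteq> B\<close>] fin by (intro crowded_t1_space_interior_of_finite[OF assms(1) t1]) simp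
      finally show False
        using p[of A] p[of B] \<open>p A = p B\<close> by (auto simp: interior_of_Int)
    qed
    moreover have "countable (range p)"
    proof (rule countable_subset)
      show "range p \<subseteq> (\<Union>n. S n)"
        using p interior_of_subset[of X] by (fastforce simp: U_def)
      show "countable (\<Union>n. S n)"
        using fin by (intro countable_UN) (auto intro: countable_finite)
    qed
    ultimately show False
      using uncountable_UNIV_nat_set countable_image_inj_on by blast
  qed
  then show ?thesis using that N_inf unfolding U_def by blast
qed

lemma weakly_converging_finitely_many_inside_closed:
  assumes "x \<in> topspace X" "closedin X C" "x \<notin> C"
    and conv: "\<And>W. neighbourhood X x W \<Longrightarrow> \<exists>F. finite F \<and> (\<forall>n. n \<notin> F \<longrightarrow> S n \<inter> W \<noteq> {})"
  shows "finite {n. S n \<subseteq> C}"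
proof -
  have "neighbourhood X x (topspace X - C)"
    using assms(1-3) by (auto simp: neighbourhood_def)
  then obtain F where F: "finite F" "\<And>n. n \<notin> F \<Longrightarrow> S n \<inter> (topspace X - C) \<noteq> {}"
    using conv by blast
  have "{n. S n \<subseteq> C} \<subseteq> F" using F(2) by blast
  then show ?thesis using F(1) by (rule finite_subset)
qed

lemma pairwise_disjoint_finite_containing:
  assumes "\<And>m n. m \<noteq> n \<Longrightarrow> S m \<inter> S n = {}"
  shows "finite {n. x \<in> S n}"
proof (cases "\<exists>m. x \<in> S m")
  case True
  then obtain m where "x \<in> S m" ..
  with assms have "{n. x \<in> S n} \<subseteq> {m}" by blast
  then show ?thesis by (rule finite_subset) simp
qed simp

theorem mainTheorem3:
  fixes X :: "'a topology"
  assumes "crowded X" and "submaximal X"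
  shows "\<not> (\<exists>S. weakly_converging_sequence X S)"
proof
  assume "\<exists>S. weakly_converging_sequence X S"
  then obtain S where S: "weakly_converging_sequence X S" ..
  then have sub: "\<And>n. S n \<subseteq> topspace X" and fin: "\<And>n. finite (S n)"
    and disj: "\<And>m n. m \<noteq> n \<Longrightarrow> S m \<inter> S n = {}"
    by (simp_all add: weakly_converging_sequence_def)
  from S obtain x where x: "x \<in> topspace X"
    and conv: "\<And>W. neighbourhood X x W \<Longrightarrow> \<exists>F. finite F \<and> (\<forall>n. n \<notin> F \<longrightarrow> S n \<inter> W \<noteq> {})"
    unfolding weakly_converging_sequence_def by blast
  obtain N where "infinite N" and N: "X interior_of (\<Union>n\<in>N. S n) = {}"
    using crowded_submaximal_union_interior_empty[OF assms fin disj] .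
  define T where "T = (\<Union>n\<in>N. S n) - {x}"
  have "T \<subseteq> topspace X" using sub by (auto simp: T_def)
  moreover have "X interior_of T \<subseteq> X interior_of (\<Union>n\<in>N. S n)"
    by (rule interior_of_mono) (auto simp: T_def)
  then have "X interior_of T = {}" using N by blast
  ultimately have "closedin X T" by (rule submaximal_closedin_of_interior_empty[OF assms(2)])
  then have "finite {n. S n \<subseteq> T}"
    using weakly_converging_finitely_many_inside_closed[OF x _ _ conv] by (simp add: T_def)
  moreover have "finite {n. x \<in> S n}" using disj by (rule pairwise_disjoint_finite_containing)
  moreover have "N - {n. x \<in> S n} \<subseteq> {n. S n \<subseteq> T}" by (auto simp: T_def)
  ultimately show False
    using \<open>infinite N\<close> by (meson Diff_infinite_finite finite_subset)
qed

end
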